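(* Let $X,Y\colon\mathcal H\leftarrow\mathcal G$ be groupoid correspondences. Any $\mathcal H,\mathcal G$-equivariant continuous map $\alpha\colon X\to Y$ is a local homeomorphism. Consequently, an injective such map is a homeomorphism from $X$ onto an open subset of $Y$, and it is a homeomorphism onto $Y$ if it is also surjective.
   Context: Groupoids are étale ($r,s$ local homeomorphisms, continuous multiplication and inversion) with Hausdorff locally compact object space. A groupoid correspondence $X\colon\mathcal H\leftarrow\mathcal G$ is a space with commuting continuous left $\mathcal H$-action (anchor $r\colon X\to\mathcal H^0$) and right $\mathcal G$-action (anchor $s\colon X\to\mathcal G^0$), such that $s$ is a local homeomorphism and the right action is free and proper. A map $\alpha$ is $\mathcal H,\mathcal G$-equivariant if it preserves both anchor maps and satisfies $\alpha(hxg)=h\alpha(x)g$. *)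

theory Defs
  imports "HOL-Analysis.Analysis"
begin

definition local_homeomorphism_map :: "'a topology \<Rightarrow> 'b topology \<Rightarrow> ('a \<Rightarrow> 'b) \<Rightarrow> bool" where
  "local_homeomorphism_map X Y f \<longleftrightarrow>
     continuous_map X Y f \<and>
     (\<forall>x\<in>topspace X. \<exists>U. openin X U \<and> x \<in> U \<and> openin Y (f ` U) \<and>
          homeomorphic_map (subtopology X U) (subtopology Y (f ` U)) f)"

record ('o, 'a) groupoid =
  obj_top :: "'o topology"
  arr_top :: "'a topology"
  rng  :: "'a \<Rightarrow> 'o"
  src  :: "'a \<Rightarrow> 'o"
  mult :: "'a \<Rightarrow> 'a \<Rightarrow> 'a"
  ginv :: "'a \<Rightarrow> 'a"
  gunit :: "'o \<Rightarrow> 'a"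

abbreviation objs :: "('o, 'a, 'z) groupoid_scheme \<Rightarrow> 'o set" where
  "objs G \<equiv> topspace (obj_top G)"

abbreviation arrs :: "('o, 'a, 'z) groupoid_scheme \<Rightarrow> 'a set" where
  "arrs G \<equiv> topspace (arr_top G)"

definition composable_pairs :: "('o, 'a, 'z) groupoid_scheme \<Rightarrow> ('a \<times> 'a) set" where
  "composable_pairs G = {(g, h). g \<in> arrs G \<and> h \<in> arrs G \<and> src G g = rng G h}"

definition groupoid_axioms :: "('o, 'a, 'z) groupoid_scheme \<Rightarrow> bool" where
  "groupoid_axioms G \<longleftrightarrow>
     (\<forall>g\<in>arrs G. rng G g \<in> objs G \<and> src G g \<in> objs G) \<and>
     (\<forall>x\<in>objs G. gunit G x \<in> arrs G \<and> rng G (gunit G x) = x \<and> src G (gunit G x) = x) \<and>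
     (\<forall>g\<in>arrs G. \<forall>h\<in>arrs G. src G g = rng G h \<longrightarrow>
        mult G g h \<in> arrs G \<and> rng G (mult G g h) = rng G g \<and> src G (mult G g h) = src G h) \<and>
     (\<forall>g\<in>arrs G. \<forall>h\<in>arrs G. \<forall>k\<in>arrs G. src G g = rng G h \<longrightarrow> src G h = rng G k \<longrightarrow>
        mult G (mult G g h) k = mult G g (mult G h k)) \<and>
     (\<forall>g\<in>arrs G. mult G (gunit G (rng G g)) g = g \<and> mult G g (gunit G (src G g)) = g) \<and>
     (\<forall>g\<in>arrs G. ginv G g \<in> arrs G \<and> rng G (ginv G g) = src G g \<and> src G (ginv G g) = rng G g \<and>
        mult G g (ginv G g) = gunit G (rng G g) \<and> mult G (ginv G g) g = gunit G (src G g))"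

definition etale_groupoid :: "('o, 'a, 'z) groupoid_scheme \<Rightarrow> bool" where
  "etale_groupoid G \<longleftrightarrow>
     groupoid_axioms G \<and>
     continuous_map (arr_top G) (obj_top G) (rng G) \<and>
     continuous_map (arr_top G) (obj_top G) (src G) \<and>
     continuous_map (obj_top G) (arr_top G) (gunit G) \<and>
     continuous_map (arr_top G) (arr_top G) (ginv G) \<and>
     continuous_map (subtopology (prod_topology (arr_top G) (arr_top G)) (composable_pairs G))
        (arr_top G) (\<lambda>(g, h). mult G g h) \<and>
     local_homeomorphism_map (arr_top G) (obj_top G) (rng G) \<and>
     local_homeomorphism_map (arr_top G) (obj_top G) (src G) \<and>
     Hausdorff_space (obj_top G) \<and> locally_compact_space (obj_top G)"

record ('x, 'ho, 'ha, 'go, 'ga) corr =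
  ctop :: "'x topology"
  lanchor :: "'x \<Rightarrow> 'ho"
  ranchor :: "'x \<Rightarrow> 'go"
  lact :: "'ha \<Rightarrow> 'x \<Rightarrow> 'x"
  ract :: "'x \<Rightarrow> 'ga \<Rightarrow> 'x"

definition lact_dom ::
  "('ho, 'ha, 'z1) groupoid_scheme \<Rightarrow> ('x, 'ho, 'ha, 'go, 'ga, 'z) corr_scheme \<Rightarrow> ('ha \<times> 'x) set" where
  "lact_dom H X = {(h, x). h \<in> arrs H \<and> x \<in> topspace (ctop X) \<and> src H h = lanchor X x}"

definition ract_dom ::
  "('go, 'ga, 'z2) groupoid_scheme \<Rightarrow> ('x, 'ho, 'ha, 'go, 'ga, 'z) corr_scheme \<Rightarrow> ('x \<times> 'ga) set" where
  "ract_dom G X = {(x, g). x \<in> topspace (ctop X) \<and> g \<in> arrs G \<and> ranchor X x = rng G g}"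

definition groupoid_correspondence ::
  "('ho, 'ha, 'z1) groupoid_scheme \<Rightarrow> ('go, 'ga, 'z2) groupoid_scheme \<Rightarrow>
   ('x, 'ho, 'ha, 'go, 'ga, 'z) corr_scheme \<Rightarrow> bool" where
  "groupoid_correspondence H G X \<longleftrightarrow>
     etale_groupoid H \<and> etale_groupoid G \<and>
     \<comment> \<open>anchor maps\<close>
     continuous_map (ctop X) (obj_top H) (lanchor X) \<and>
     continuous_map (ctop X) (obj_top G) (ranchor X) \<and>
     \<comment> \<open>left H-action\<close>
     (\<forall>(h, x)\<in>lact_dom H X. lact X h x \<in> topspace (ctop X) \<and>
        lanchor X (lact X h x) = rng H h \<and> ranchor X (lact X h x) = ranchor X x) \<and>
     (\<forall>x\<in>topspace (ctop X). lact X (gunit H (lanchor X x)) x = x) \<and>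
     (\<forall>h1\<in>arrs H. \<forall>h2\<in>arrs H. \<forall>x\<in>topspace (ctop X).
        src H h1 = rng H h2 \<longrightarrow> src H h2 = lanchor X x \<longrightarrow>
        lact X h1 (lact X h2 x) = lact X (mult H h1 h2) x) \<and>
     continuous_map (subtopology (prod_topology (arr_top H) (ctop X)) (lact_dom H X))
        (ctop X) (\<lambda>(h, x). lact X h x) \<and>
     \<comment> \<open>right G-action\<close>
     (\<forall>(x, g)\<in>ract_dom G X. ract X x g \<in> topspace (ctop X) \<and>
        ranchor X (ract X x g) = src G g \<and> lanchor X (ract X x g) = lanchor X x) \<and>
     (\<forall>x\<in>topspace (ctop X). ract X x (gunit G (ranchor X x)) = x) \<and>
     (\<forall>x\<in>topspace (ctop X). \<forall>g1\<in>arrs G. \<forall>g2\<in>arrs G.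
        ranchor X x = rng G g1 \<longrightarrow> src G g1 = rng G g2 \<longrightarrow>
        ract X (ract X x g1) g2 = ract X x (mult G g1 g2)) \<and>
     continuous_map (subtopology (prod_topology (ctop X) (arr_top G)) (ract_dom G X))
        (ctop X) (\<lambda>(x, g). ract X x g) \<and>
     \<comment> \<open>the actions commute\<close>
     (\<forall>h\<in>arrs H. \<forall>x\<in>topspace (ctop X). \<forall>g\<in>arrs G.
        src H h = lanchor X x \<longrightarrow> ranchor X x = rng G g \<longrightarrow>
        ract X (lact X h x) g = lact X h (ract X x g)) \<and>
     \<comment> \<open>s is a local homeomorphism\<close>
     local_homeomorphism_map (ctop X) (obj_top G) (ranchor X) \<and>
     \<comment> \<open>right action free\<close>
     (\<forall>(x, g)\<in>ract_dom G X. ract X x g = x \<longrightarrow> g = gunit G (ranchor X x)) \<and>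
     \<comment> \<open>right action proper\<close>
     proper_map (subtopology (prod_topology (ctop X) (arr_top G)) (ract_dom G X))
        (prod_topology (ctop X) (ctop X)) (\<lambda>(x, g). (x, ract X x g))"

definition equivariant_map ::
  "('ho, 'ha, 'z1) groupoid_scheme \<Rightarrow> ('go, 'ga, 'z2) groupoid_scheme \<Rightarrow>
   ('x, 'ho, 'ha, 'go, 'ga, 'z) corr_scheme \<Rightarrow> ('y, 'ho, 'ha, 'go, 'ga, 'w) corr_scheme \<Rightarrow>
   ('x \<Rightarrow> 'y) \<Rightarrow> bool" where
  "equivariant_map H G X Y f \<longleftrightarrow>
     (\<forall>x\<in>topspace (ctop X). f x \<in> topspace (ctop Y)) \<and>
     (\<forall>x\<in>topspace (ctop X). lanchor Y (f x) = lanchor X x \<and> ranchor Y (f x) = ranchor X x) \<and>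
     (\<forall>h\<in>arrs H. \<forall>x\<in>topspace (ctop X). \<forall>g\<in>arrs G.
        src H h = lanchor X x \<longrightarrow> ranchor X x = rng G g \<longrightarrow>
        f (ract X (lact X h x) g) = ract Y (lact Y h (f x)) g)"

end

theory Submission
  imports Defs
begin

text \<open>The right anchor map is a local homeomorphism on both X and Y, and equivariance makes
  it factor as ranchor Y \<circ> \<alpha> = ranchor X. A continuous map between two local homeomorphisms
  over a common base is itself a local homeomorphism: near x, \<alpha> is the composite of a chart
  of ranchor X with the inverse of a chart of ranchor Y. Local homeomorphisms are open maps, so
  an injective one is an embedding with open image.\<close>

lemma homeomorphic_map_cancel_left:
  assumes f: "continuous_map X Y f"
    and q: "homeomorphic_map Y Z q"
    and p: "homeomorphic_map X Z p"
    and comm: "\<And>x. x \<in> topspace X \<Longrightarrow> q (f x) = p x"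
  shows "homeomorphic_map X Y f"
proof -
  obtain g where g: "homeomorphic_maps Y Z q g"
    using q by (auto simp: homeomorphic_map_maps)
  have "homeomorphic_map X Y (g \<circ> p)"
    using p g by (intro homeomorphic_map_compose) (auto simp: homeomorphic_maps_map)
  moreover have "(g \<circ> p) x = f x" if "x \<in> topspace X" for x
  proof -
    have "f x \<in> topspace Y"
      using f that by (auto simp: continuous_map_def)
    then show ?thesis
      using g comm[OF that] unfolding homeomorphic_maps_def by (metis comp_apply)
  qed
  ultimately show ?thesis
    by (rule homeomorphic_map_eq)
qed

context
  fixes X :: "'a topology" and Y :: "'b topology" and f :: "'a \<Rightarrow> 'b" and U :: "'a set"
  assumes U: "openin X U" and fU: "openin Y (f ` U)"
    and chart: "homeomorphic_map (subtopology X U) (subtopology Y (f ` U)) f"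
begin

lemma chart_openin_image_iff:
  assumes "S \<subseteq> U"
  shows "openin Y (f ` S) \<longleftrightarrow> openin X S"
proof -
  have "openin (subtopology Y (f ` U)) (f ` S) \<longleftrightarrow> openin (subtopology X U) S"
    using assms openin_subset[OF U] by (intro homeomorphic_map_openness[OF chart]) auto
  then show ?thesis
    using assms by (simp add: openin_open_subtopology[OF U] openin_open_subtopology[OF fU] image_mono)
qed

lemma chart_restrict:
  assumes "S \<subseteq> U"
  shows "homeomorphic_map (subtopology X S) (subtopology Y (f ` S)) f"
proof -
  have "homeomorphic_map (subtopology (subtopology X U) S) (subtopology (subtopology Y (f ` U)) (f ` S)) f"
    using assms openin_subset[OF U] openin_subset[OF fU]
    by (intro homeomorphic_map_subtopologies[OF chart]) auto
  then show ?thesis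
    using assms by (simp add: subtopology_subtopology Int_absorb1 image_mono)
qed

end

lemma local_homeomorphism_imp_open_map:
  assumes "local_homeomorphism_map X Y f"
  shows "open_map X Y f"
  unfolding open_map_def
proof (intro allI impI)
  fix S assume S: "openin X S"
  show "openin Y (f ` S)"
  proof (subst openin_subopen, intro ballI)
    fix y assume "y \<in> f ` S"
    then obtain x where x: "x \<in> S" "y = f x" by auto
    then obtain U where U: "openin X U" "x \<in> U" "openin Y (f ` U)"
      "homeomorphic_map (subtopology X U) (subtopology Y (f ` U)) f"
      using assms openin_subset[OF S] unfolding local_homeomorphism_map_def by blast
    have "openin Y (f ` (S \<inter> U))"
      using chart_openin_image_iff[OF U(1,3,4)] S U(1) by blast
    then show "\<exists>T. openin Y T \<and> y \<in> T \<and> T \<subseteq> f ` S"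
      using x U(2) by blast
  qed
qed

lemma local_homeomorphism_cancel_left:
  assumes f: "continuous_map X Y f"
    and p: "local_homeomorphism_map X Z p"
    and q: "local_homeomorphism_map Y Z q"
    and comm: "\<And>x. x \<in> topspace X \<Longrightarrow> q (f x) = p x"
  shows "local_homeomorphism_map X Y f"
  unfolding local_homeomorphism_map_def
proof (intro conjI f ballI)
  fix x assume x: "x \<in> topspace X"
  obtain U where U: "openin X U" "x \<in> U" "openin Z (p ` U)"
      "homeomorphic_map (subtopology X U) (subtopology Z (p ` U)) p"
    using p x unfolding local_homeomorphism_map_def by blast
  obtain V where V: "openin Y V" "f x \<in> V" "openin Z (q ` V)"
      "homeomorphic_map (subtopology Y V) (subtopology Z (q ` V)) q"
    using q x continuous_map_image_subset_topspace[OF f]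
    unfolding local_homeomorphism_map_def by blast
  define W where "W = {y \<in> U. f y \<in> V}"
  have W: "openin X W" "W \<subseteq> U" "x \<in> W"
    using openin_continuous_map_preimage_gen[OF f U(1) V(1)] U(2) V(2) by (auto simp: W_def)
  have fW: "f ` W \<subseteq> V"
    by (auto simp: W_def)
  have qfW: "q ` f ` W = p ` W"
    using comm W(2) openin_subset[OF U(1)] by (force simp: image_comp)
  have "openin Z (p ` W)"
    using chart_openin_image_iff[OF U(1,3,4) W(2)] W(1) by blast
  then have open_fW: "openin Y (f ` W)"
    using chart_openin_image_iff[OF V(1,3,4) fW] qfW by simp
  have "homeomorphic_map (subtopology X W) (subtopology Y (f ` W)) f"
  proof (rule homeomorphic_map_cancel_left)
    show "continuous_map (subtopology X W) (subtopology Y (f ` W)) f"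
      using f by (auto simp: continuous_map_in_subtopology continuous_map_from_subtopology)
    show "homeomorphic_map (subtopology Y (f ` W)) (subtopology Z (p ` W)) q"
      using chart_restrict[OF V(1,3,4) fW] qfW by simp
    show "homeomorphic_map (subtopology X W) (subtopology Z (p ` W)) p"
      using chart_restrict[OF U(1,3,4) W(2)] .
  qed (use comm in auto)
  then show "\<exists>W. openin X W \<and> x \<in> W \<and> openin Y (f ` W) \<and>
          homeomorphic_map (subtopology X W) (subtopology Y (f ` W)) f"
    using W open_fW by blast
qed

theorem lemma6p1:
  fixes H :: "('ho, 'ha) groupoid" and G :: "('go, 'ga) groupoid"
    and X :: "('x, 'ho, 'ha, 'go, 'ga) corr" and Y :: "('y, 'ho, 'ha, 'go, 'ga) corr"
    and \<alpha> :: "'x \<Rightarrow> 'y"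
  assumes "groupoid_correspondence H G X"
    and "groupoid_correspondence H G Y"
    and "equivariant_map H G X Y \<alpha>"
    and "continuous_map (ctop X) (ctop Y) \<alpha>"
  shows "local_homeomorphism_map (ctop X) (ctop Y) \<alpha>
    \<and> (inj_on \<alpha> (topspace (ctop X)) \<longrightarrow>
         openin (ctop Y) (\<alpha> ` topspace (ctop X)) \<and>
         homeomorphic_map (ctop X) (subtopology (ctop Y) (\<alpha> ` topspace (ctop X))) \<alpha>)
    \<and> (inj_on \<alpha> (topspace (ctop X)) \<and> \<alpha> ` topspace (ctop X) = topspace (ctop Y) \<longrightarrow>
         homeomorphic_map (ctop X) (ctop Y) \<alpha>)"
proof -
  have local_homeo: "local_homeomorphism_map (ctop X) (ctop Y) \<alpha>"
  proof (rule local_homeomorphism_cancel_left[OF assms(4)])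
    show "local_homeomorphism_map (ctop X) (obj_top G) (ranchor X)"
      "local_homeomorphism_map (ctop Y) (obj_top G) (ranchor Y)"
      using assms(1,2) unfolding groupoid_correspondence_def by blast+
    show "\<And>x. x \<in> topspace (ctop X) \<Longrightarrow> ranchor Y (\<alpha> x) = ranchor X x"
      using assms(3) unfolding equivariant_map_def by blast
  qed
  then have "open_map (ctop X) (ctop Y) \<alpha>"
    by (rule local_homeomorphism_imp_open_map)
  then have "openin (ctop Y) (\<alpha> ` topspace (ctop X))"
    and "inj_on \<alpha> (topspace (ctop X)) \<Longrightarrow> embedding_map (ctop X) (ctop Y) \<alpha>"
    using assms(4) by (auto simp: open_map_def intro: injective_open_imp_embedding_map)
  then show ?thesis
    using local_homeo surjective_embedding_map unfolding embedding_map_def by blast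
qed

end
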